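(* Let $(V,\nu)$ and $(W,\mu)$ be strongly complete PN-spaces and let $T:V\to W$ be a linear operator with closed graph, i.e. whenever $x_n\to x$ strongly in $V$ and $Tx_n\to y$ strongly in $W$, then $y=Tx$. Then $T\in B(V,W)$.
   Context: A distance distribution function is a map $F:[-\infty,+\infty]\to[0,1]$ that is nondecreasing, left-continuous on $\mathbb{R}$, with $F(-\infty)=0$, $F(+\infty)=1$ and $F(0)=0$; the set of these is $\Delta^+$. $\mathcal{D}^+\subseteq\Delta^+$ denotes the proper ones, i.e. those with $\lim_{x\to+\infty}F(x)=1$. $H_0\in\Delta^+$ is $H_0(x)=0$ for $x\le 0$ and $H_0(x)=1$ for $x>0$. For $F,G\in\Delta^+$ let $\tau_M(F,G)(x)=\sup\{\min(F(s),G(t)) : s+t=x\}$. In this paper a PN-space $(V,\nu)$ is a real vector space $V$ with a map $\nu:V\to\Delta^+$, $p\mapsto\nu_p$, such that for all $p,q\in V$: $\nu_p=H_0$ iff $p=0$; $\nu_{p+q}\ge\tau_M(\nu_p,\nu_q)$ pointwise; and $\nu_{\alpha p}(x)=\nu_p(x/|\alpha|)$ for all real $\alpha\neq0$ and $x\ge 0$. Standing assumption: $\nu_p\in\mathcal{D}^+$ for every $p\in V$. For $x\in V$ and $w\in(0,1)$ put $\|x\|_w=\sup\{t\in\mathbb{R}:\nu_x(t)<w\}$; for each $w$ this is a norm on $V$, and $w\mapsto\|x\|_w$ is nondecreasing. The strong topology on $V$ is generated by the neighbourhoods $N_p(t)=\{q\in V:\nu_{p-q}(t)>1-t\}$, $p\in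 V$, $t>0$; equivalently the balls $\{x:\|x-p\|_w<r\}$ form a basis for it. A sequence $(p_n)$ converges strongly to $p$ if for every $t>0$ one has $p_n\in N_p(t)$ for all large $n$; it is strongly Cauchy if for every $t>0$ there is $N$ with $\nu_{p_n-p_m}(t)>1-t$ for all $m,n>N$. $(V,\nu)$ is strongly complete if every strongly Cauchy sequence converges strongly. $B(V,W)$ denotes the set of linear operators $V\to W$ that are continuous for the strong topologies. *)

theory Defs
  imports "HOL-Analysis.Analysis"
begin

text \<open>Distance distribution functions, represented by their restriction to the reals.
  The values at -infinity (= 0) and +infinity (= 1) are fixed by convention and carry no
  information; the standing assumption that every nu_p is proper is included below.\<close>

definition ddf :: "(real \<Rightarrow> real) \<Rightarrow> bool" where
  "ddf F \<longleftrightarrow> mono F \<and> (\<forall>x. continuous (at_left x) F) \<and>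
     (\<forall>x. 0 \<le> F x \<and> F x \<le> 1) \<and> F 0 = 0"

definition proper_ddf :: "(real \<Rightarrow> real) \<Rightarrow> bool" where
  "proper_ddf F \<longleftrightarrow> ddf F \<and> (F \<longlongrightarrow> 1) at_top"

definition H0 :: "real \<Rightarrow> real" where
  "H0 x = (if x \<le> 0 then 0 else 1)"

definition tauM :: "(real \<Rightarrow> real) \<Rightarrow> (real \<Rightarrow> real) \<Rightarrow> real \<Rightarrow> real" where
  "tauM F G x = Sup {min (F s) (G t) | s t. s + t = x}"

definition PN_space :: "('a::real_vector \<Rightarrow> real \<Rightarrow> real) \<Rightarrow> bool" where
  "PN_space \<nu> \<longleftrightarrow>
     (\<forall>p. proper_ddf (\<nu> p)) \<and>
     (\<forall>p. \<nu> p = H0 \<longleftrightarrow> p = 0) \<and>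
     (\<forall>p q x. tauM (\<nu> p) (\<nu> q) x \<le> \<nu> (p + q) x) \<and>
     (\<forall>\<alpha> p x. \<alpha> \<noteq> 0 \<and> x \<ge> 0 \<longrightarrow> \<nu> (\<alpha> *\<^sub>R p) x = \<nu> p (x / \<bar>\<alpha>\<bar>))"

definition strong_nbhd :: "('a::real_vector \<Rightarrow> real \<Rightarrow> real) \<Rightarrow> 'a \<Rightarrow> real \<Rightarrow> 'a set" where
  "strong_nbhd \<nu> p t = {q. \<nu> (p - q) t > 1 - t}"

definition strong_topology :: "('a::real_vector \<Rightarrow> real \<Rightarrow> real) \<Rightarrow> 'a topology" where
  "strong_topology \<nu> = topology (\<lambda>U. \<forall>p\<in>U. \<exists>t>0. strong_nbhd \<nu> p t \<subseteq> U)"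

definition strong_conv :: "('a::real_vector \<Rightarrow> real \<Rightarrow> real) \<Rightarrow> (nat \<Rightarrow> 'a) \<Rightarrow> 'a \<Rightarrow> bool" where
  "strong_conv \<nu> xs p \<longleftrightarrow> (\<forall>t>0. eventually (\<lambda>n. xs n \<in> strong_nbhd \<nu> p t) sequentially)"

definition strong_Cauchy :: "('a::real_vector \<Rightarrow> real \<Rightarrow> real) \<Rightarrow> (nat \<Rightarrow> 'a) \<Rightarrow> bool" where
  "strong_Cauchy \<nu> xs \<longleftrightarrow> (\<forall>t>0. \<exists>N. \<forall>m n. m > N \<and> n > N \<longrightarrow> \<nu> (xs n - xs m) t > 1 - t)"

definition strongly_complete :: "('a::real_vector \<Rightarrow> real \<Rightarrow> real) \<Rightarrow> bool" where
  "strongly_complete \<nu> \<longleftrightarrow> (\<forall>xs. strong_Cauchy \<nu> xs \<longrightarrow> (\<exists>p. strong_conv \<nu> xs p))"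

definition bounded_ops ::
  "('a::real_vector \<Rightarrow> real \<Rightarrow> real) \<Rightarrow> ('b::real_vector \<Rightarrow> real \<Rightarrow> real) \<Rightarrow> ('a \<Rightarrow> 'b) set" where
  "bounded_ops \<nu> \<mu> = {T. linear T \<and> continuous_map (strong_topology \<nu>) (strong_topology \<mu>) T}"

end

(*
  The sets zero_nbhd nu t = {x. nu x t > 1 - t} behave like the balls of an F-norm: they grow
  with t, satisfy N(a) + N(b) <= N(a + b) by the tau_M triangle inequality, are balanced, and
  absorb every vector because each nu x is proper. Hence the Banach-space proof of the closed
  graph theorem goes through. Strong completeness gives a Baire category theorem, which applied
  to the dilates of the preimage of N(t) shows that this preimage is dense in some N(s).
  Successive approximation upgrades density to T(N(s)) <= N(t): the approximations tend to 0,
  and the closed graph identifies the limit of their images as T 0 = 0. Continuity at 0 then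
  gives continuity everywhere by linearity.
*)

theory Submission
  imports Defs
begin

definition zero_nbhd :: "('a::real_vector \<Rightarrow> real \<Rightarrow> real) \<Rightarrow> real \<Rightarrow> 'a set" where
  "zero_nbhd \<nu> t = {x. 1 - t < \<nu> x t}"

definition strong_closure :: "('a::real_vector \<Rightarrow> real \<Rightarrow> real) \<Rightarrow> 'a set \<Rightarrow> 'a set" where
  "strong_closure \<nu> A = {y. \<forall>\<rho>>0. \<exists>b\<in>A. y - b \<in> zero_nbhd \<nu> \<rho>}"

lemma strong_nbhd_eq: "strong_nbhd \<nu> p t = {q. p - q \<in> zero_nbhd \<nu> t}"
  by (simp add: strong_nbhd_def zero_nbhd_def)

locale pn_space =
  fixes \<nu> :: "'a::real_vector \<Rightarrow> real \<Rightarrow> real"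
  assumes PN_space: "PN_space \<nu>"
begin

lemma mono: "s \<le> t \<Longrightarrow> \<nu> x s \<le> \<nu> x t"
  using PN_space unfolding PN_space_def proper_ddf_def ddf_def mono_def by blast

lemma le_one: "\<nu> x t \<le> 1"
  using PN_space unfolding PN_space_def proper_ddf_def ddf_def by blast

lemma tendsto_one: "(\<nu> x \<longlongrightarrow> 1) at_top"
  using PN_space unfolding PN_space_def proper_ddf_def by blast

lemma scaleR: "a \<noteq> 0 \<Longrightarrow> 0 \<le> t \<Longrightarrow> \<nu> (a *\<^sub>R x) t = \<nu> x (t / \<bar>a\<bar>)"
  using PN_space unfolding PN_space_def by blast

lemma zero_nbhd_pos: "x \<in> zero_nbhd \<nu> t \<Longrightarrow> 0 < t"
  using le_one[of x t] unfolding zero_nbhd_def by force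

lemma zero_eq_H0: "\<nu> 0 = H0"
  using PN_space unfolding PN_space_def by blast

lemma zero_in_zero_nbhd: "0 < t \<Longrightarrow> 0 \<in> zero_nbhd \<nu> t"
  by (simp add: zero_nbhd_def zero_eq_H0 H0_def)

lemma zero_nbhd_mono: "s \<le> t \<Longrightarrow> x \<in> zero_nbhd \<nu> s \<Longrightarrow> x \<in> zero_nbhd \<nu> t"
  using mono[of s t x] unfolding zero_nbhd_def by auto

lemma zero_nbhd_add:
  assumes x: "x \<in> zero_nbhd \<nu> a" and y: "y \<in> zero_nbhd \<nu> b"
  shows "x + y \<in> zero_nbhd \<nu> (a + b)"
proof -
  have "min (\<nu> x a) (\<nu> y b) \<le> tauM (\<nu> x) (\<nu> y) (a + b)"
    unfolding tauM_def
    by (rule cSup_upper) (auto intro!: bdd_aboveI[of _ 1] simp: le_one min_le_iff_disj)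
  also have "\<dots> \<le> \<nu> (x + y) (a + b)"
    using PN_space unfolding PN_space_def by blast
  finally show ?thesis
    using x y zero_nbhd_pos[OF x] zero_nbhd_pos[OF y] unfolding zero_nbhd_def by auto
qed

lemma zero_nbhd_uminus [simp]: "- x \<in> zero_nbhd \<nu> t \<longleftrightarrow> x \<in> zero_nbhd \<nu> t"
proof -
  have "\<nu> (- x) t = \<nu> x t" if "0 < t"
    using scaleR[of "-1" t x] that by simp
  then show ?thesis
    using zero_nbhd_pos[of x t] zero_nbhd_pos[of "- x" t] unfolding zero_nbhd_def by force
qed

lemma zero_nbhd_diff:
  "x \<in> zero_nbhd \<nu> a \<Longrightarrow> y \<in> zero_nbhd \<nu> b \<Longrightarrow> x - y \<in> zero_nbhd \<nu> (a + b)"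
  using zero_nbhd_add[of x a "- y" b] by simp

lemma zero_nbhd_scaleR_shrink:
  assumes x: "x \<in> zero_nbhd \<nu> t" and a: "\<bar>a\<bar> \<le> 1"
  shows "a *\<^sub>R x \<in> zero_nbhd \<nu> t"
proof (cases "a = 0")
  case True
  then show ?thesis using zero_in_zero_nbhd[OF zero_nbhd_pos[OF x]] by simp
next
  case False
  have t: "0 < t" using zero_nbhd_pos[OF x] .
  then have "t \<le> t / \<bar>a\<bar>" using False a by (simp add: field_simps)
  then have "\<nu> x t \<le> \<nu> (a *\<^sub>R x) t" using scaleR[OF False, of t x] t mono by simp
  then show ?thesis using x unfolding zero_nbhd_def by simp
qed

lemma zero_nbhd_scaleR_stretch:
  assumes x: "x \<in> zero_nbhd \<nu> t" and c: "1 \<le> c"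
  shows "c *\<^sub>R x \<in> zero_nbhd \<nu> (c * t)"
proof -
  have t: "0 < t" using zero_nbhd_pos[OF x] .
  have "\<nu> (c *\<^sub>R x) (c * t) = \<nu> x t" using scaleR[of c "c * t" x] t c by simp
  moreover have "1 - c * t \<le> 1 - t" using t c by (simp add: mult_le_cancel_right1)
  ultimately show ?thesis using x unfolding zero_nbhd_def by simp
qed

lemma zero_nbhd_absorbing:
  assumes t: "0 < t"
  shows "\<exists>k. v /\<^sub>R real (Suc k) \<in> zero_nbhd \<nu> t"
proof -
  have "eventually (\<lambda>u. 1 - t < \<nu> v u) at_top"
    using tendsto_one t by (intro order_tendstoD) auto
  then obtain M where M: "\<And>u. M \<le> u \<Longrightarrow> 1 - t < \<nu> v u"
    unfolding eventually_at_top_linorder by blast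
  obtain k where k: "M / t < real k" using reals_Archimedean2 by blast
  then have "1 - t < \<nu> v (real (Suc k) * t)"
    using M t by (simp add: field_simps)
  moreover have "\<nu> (v /\<^sub>R real (Suc k)) t = \<nu> v (real (Suc k) * t)"
    using scaleR[of "inverse (real (Suc k))" t v] t by (simp add: field_simps)
  ultimately show ?thesis unfolding zero_nbhd_def by (intro exI[of _ k]) simp
qed

lemma zero_nbhd_telescope:
  assumes steps: "\<And>n. g n - g (Suc n) \<in> zero_nbhd \<nu> (c n - c (Suc n))" and "m < n"
  shows "g m - g n \<in> zero_nbhd \<nu> (c m - c n)"
  using \<open>m < n\<close>
proof (induction n)
  case (Suc n)
  show ?case
  proof (cases "m = n")
    case False
    then have "g m - g n + (g n - g (Suc n)) \<in> zero_nbhd \<nu> (c m - c n + (c n - c (Suc n)))"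
      using Suc by (intro zero_nbhd_add steps) simp
    then show ?thesis by simp
  qed (use steps in simp)
qed simp

lemma strong_Cauchy_if_steps:
  assumes steps: "\<And>n. g n - g (Suc n) \<in> zero_nbhd \<nu> (c n - c (Suc n))" and c: "c \<longlonglongrightarrow> 0"
  shows "strong_Cauchy \<nu> g"
  unfolding strong_Cauchy_def
proof (intro allI impI)
  fix e :: real assume e: "0 < e"
  have "decseq c"
    using zero_nbhd_pos[OF steps] by (intro decseq_SucI) (simp add: less_imp_le)
  then have c_nonneg: "0 \<le> c n" for n using decseq_ge[OF _ c] by blast
  obtain N where N: "\<And>n. N \<le> n \<Longrightarrow> c n < e"
    using order_tendstoD(2)[OF c e] unfolding eventually_sequentially by blast
  have close: "g m - g n \<in> zero_nbhd \<nu> e" if "N < m" "m < n" for m n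
    using zero_nbhd_mono[OF _ zero_nbhd_telescope[of g c, OF steps that(2)]]
      N[of m] c_nonneg[of n] that(1) by simp
  have "g n - g m \<in> zero_nbhd \<nu> e" if "N < m" "N < n" for m n
  proof (cases m n rule: linorder_cases)
    case less
    then show ?thesis using close[of m n] that by (simp flip: zero_nbhd_uminus[of "g n - g m"])
  next
    case equal
    then show ?thesis using zero_in_zero_nbhd[OF e] by simp
  next
    case greater
    then show ?thesis using close[of n m] that by simp
  qed
  then show "\<exists>N. \<forall>m n. N < m \<and> N < n \<longrightarrow> 1 - e < \<nu> (g n - g m) e"
    unfolding zero_nbhd_def by blast
qed

lemma strong_conv_if_eventually:
  assumes "eventually (\<lambda>n. p - xs n \<in> zero_nbhd \<nu> (e n)) sequentially" and "e \<longlonglongrightarrow> 0"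
  shows "strong_conv \<nu> xs p"
  unfolding strong_conv_def strong_nbhd_eq mem_Collect_eq
proof (intro allI impI)
  fix t :: real assume "0 < t"
  then have "eventually (\<lambda>n. e n < t) sequentially" using order_tendstoD(2)[OF assms(2)] by simp
  with assms(1) show "eventually (\<lambda>n. p - xs n \<in> zero_nbhd \<nu> t) sequentially"
    by eventually_elim (auto intro: zero_nbhd_mono less_imp_le)
qed

lemma nested_balls:
  fixes A :: "nat \<Rightarrow> 'a set"
  assumes escape: "\<And>k a r. 0 < r \<Longrightarrow> \<not> {y. a - y \<in> zero_nbhd \<nu> r} \<subseteq> strong_closure \<nu> (A k)"
  obtains r z where "\<And>n. 0 < r n" "\<And>n. r n \<le> (1/2) ^ n"
    "\<And>n. z n - z (Suc n) \<in> zero_nbhd \<nu> (r n / 2 - r (Suc n) / 2)"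
    "\<And>n b. b \<in> A n \<Longrightarrow> z (Suc n) - b \<notin> zero_nbhd \<nu> (r (Suc n))"
proof -
  define ball_ok where "ball_ok n zr \<longleftrightarrow> 0 < snd zr \<and> snd zr \<le> (1/2::real) ^ n"
    for n and zr :: "'a \<times> real"
  define next_ball where "next_ball n zr zr' \<longleftrightarrow> snd zr' \<le> snd zr / 4
      \<and> fst zr - fst zr' \<in> zero_nbhd \<nu> (snd zr / 4) \<and> (\<forall>b\<in>A n. fst zr' - b \<notin> zero_nbhd \<nu> (snd zr'))"
    for n and zr zr' :: "'a \<times> real"
  have "\<exists>f. \<forall>n. ball_ok n (f n) \<and> next_ball n (f n) (f (Suc n))"
  proof (rule dependent_nat_choice)
    show "\<exists>zr. ball_ok 0 zr" unfolding ball_ok_def by (intro exI[of _ "(0, 1)"]) simp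
  next
    fix zr n assume "ball_ok n zr"
    obtain z r where zr: "zr = (z, r)" by force
    have r: "0 < r" "r \<le> (1/2) ^ n" using \<open>ball_ok n zr\<close> zr unfolding ball_ok_def by auto
    then have "0 < r / 4" by simp
    then obtain y where y: "z - y \<in> zero_nbhd \<nu> (r / 4)" "y \<notin> strong_closure \<nu> (A n)"
      using escape by blast
    then obtain \<rho> where \<rho>: "0 < \<rho>" and avoid: "\<forall>b\<in>A n. y - b \<notin> zero_nbhd \<nu> \<rho>"
      unfolding strong_closure_def by blast
    define r' where "r' = min \<rho> (r / 4)"
    have "\<forall>b\<in>A n. y - b \<notin> zero_nbhd \<nu> r'"
      using avoid zero_nbhd_mono[of r' \<rho>] unfolding r'_def by auto
    moreover have "0 < r'" "r' \<le> r / 4" "r' \<le> (1/2) ^ Suc n"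
      using r \<rho> unfolding r'_def by auto
    ultimately have "ball_ok (Suc n) (y, r') \<and> next_ball n zr (y, r')"
      using y(1) zr unfolding ball_ok_def next_ball_def by simp
    then show "\<exists>zr'. ball_ok (Suc n) zr' \<and> next_ball n zr zr'" ..
  qed
  then obtain f where f: "\<And>n. ball_ok n (f n) \<and> next_ball n (f n) (f (Suc n))" by blast
  show ?thesis
  proof
    show r: "0 < snd (f n)" "snd (f n) \<le> (1/2) ^ n" for n
      using f[of n] unfolding ball_ok_def by auto
    show "b \<in> A n \<Longrightarrow> fst (f (Suc n)) - b \<notin> zero_nbhd \<nu> (snd (f (Suc n)))" for n b
      using f[of n] unfolding next_ball_def by auto
    show "fst (f n) - fst (f (Suc n)) \<in> zero_nbhd \<nu> (snd (f n) / 2 - snd (f (Suc n)) / 2)" for n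
    proof (rule zero_nbhd_mono)
      show "snd (f n) / 4 \<le> snd (f n) / 2 - snd (f (Suc n)) / 2"
        using f[of n] r(1)[of n] unfolding next_ball_def by linarith
      show "fst (f n) - fst (f (Suc n)) \<in> zero_nbhd \<nu> (snd (f n) / 4)"
        using f[of n] unfolding next_ball_def by simp
    qed
  qed
qed

text \<open>Baire category theorem. Were it false, the centres of the nested balls above would
  converge to a point lying in no \<open>A k\<close>.\<close>

theorem baire_category:
  fixes A :: "nat \<Rightarrow> 'a set"
  assumes complete: "strongly_complete \<nu>" and cover: "\<And>y. \<exists>k. y \<in> A k"
  shows "\<exists>k a r. 0 < r \<and> {y. a - y \<in> zero_nbhd \<nu> r} \<subseteq> strong_closure \<nu> (A k)"
proof (rule ccontr)
  assume "\<not> ?thesis"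
  then have "\<not> {y. a - y \<in> zero_nbhd \<nu> r} \<subseteq> strong_closure \<nu> (A k)" if "0 < r" for k a r
    using that by blast
  then obtain r z where r: "\<And>n. 0 < r n" "\<And>n. r n \<le> (1/2) ^ n"
    and steps: "\<And>n. z n - z (Suc n) \<in> zero_nbhd \<nu> (r n / 2 - r (Suc n) / 2)"
    and avoid: "\<And>n b. b \<in> A n \<Longrightarrow> z (Suc n) - b \<notin> zero_nbhd \<nu> (r (Suc n))"
    by (rule nested_balls[of A]) blast+
  have "r \<longlonglongrightarrow> 0"
    by (rule Lim_null_comparison[of _ "\<lambda>n. (1/2) ^ n"])
      (use r in \<open>auto intro!: always_eventually LIMSEQ_power_zero simp: abs_of_pos\<close>)
  then have "(\<lambda>n. r n / 2) \<longlonglongrightarrow> 0" by (simp add: tendsto_divide_zero)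
  then obtain w where w: "strong_conv \<nu> z w"
    using complete strong_Cauchy_if_steps[of z "\<lambda>n. r n / 2", OF steps]
    unfolding strongly_complete_def by blast
  obtain k where k: "w \<in> A k" using cover by blast
  have "eventually (\<lambda>m. w - z m \<in> zero_nbhd \<nu> (r (Suc k) / 2)) sequentially"
    using w r(1)[of "Suc k"] unfolding strong_conv_def strong_nbhd_eq by simp
  then obtain M where M: "\<And>m. M \<le> m \<Longrightarrow> w - z m \<in> zero_nbhd \<nu> (r (Suc k) / 2)"
    unfolding eventually_sequentially by blast
  define m where "m = max M (Suc (Suc k))"
  have "z (Suc k) - z m \<in> zero_nbhd \<nu> (r (Suc k) / 2 - r m / 2)"
    using zero_nbhd_telescope[of z "\<lambda>n. r n / 2", OF steps] unfolding m_def by simp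
  then have "z (Suc k) - z m \<in> zero_nbhd \<nu> (r (Suc k) / 2)"
    by (rule zero_nbhd_mono[rotated]) (use r(1)[of m] in simp)
  from zero_nbhd_diff[OF this M[of m]]
  have "z (Suc k) - z m - (w - z m) \<in> zero_nbhd \<nu> (r (Suc k) / 2 + r (Suc k) / 2)"
    unfolding m_def by simp
  then show False using avoid[OF k] by simp
qed

lemma istopology_strong:
  "istopology (\<lambda>U. \<forall>p\<in>U. \<exists>t>0. strong_nbhd \<nu> p t \<subseteq> U)"
  unfolding istopology_def
proof (intro conjI allI impI ballI)
  fix S U :: "'a set" and p
  assume S: "\<forall>p\<in>S. \<exists>t>0. strong_nbhd \<nu> p t \<subseteq> S" and U: "\<forall>p\<in>U. \<exists>t>0. strong_nbhd \<nu> p t \<subseteq> U"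
    and "p \<in> S \<inter> U"
  then obtain s t where "0 < s" "0 < t" "strong_nbhd \<nu> p s \<subseteq> S" "strong_nbhd \<nu> p t \<subseteq> U"
    by blast
  moreover have "strong_nbhd \<nu> p (min s t) \<subseteq> strong_nbhd \<nu> p s \<inter> strong_nbhd \<nu> p t"
    unfolding strong_nbhd_eq by (auto intro: zero_nbhd_mono[rotated])
  ultimately show "\<exists>r>0. strong_nbhd \<nu> p r \<subseteq> S \<inter> U"
    by (intro exI[of _ "min s t"]) auto
next
  fix \<K> :: "'a set set" and p
  assume "\<forall>K\<in>\<K>. \<forall>p\<in>K. \<exists>t>0. strong_nbhd \<nu> p t \<subseteq> K" and "p \<in> \<Union>\<K>"
  then show "\<exists>t>0. strong_nbhd \<nu> p t \<subseteq> \<Union>\<K>" by (meson Union_upper order_trans UnionE)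
qed

lemma openin_strong_topology:
  "openin (strong_topology \<nu>) U \<longleftrightarrow> (\<forall>p\<in>U. \<exists>t>0. strong_nbhd \<nu> p t \<subseteq> U)"
  unfolding strong_topology_def by (subst topology_inverse'[OF istopology_strong]) auto

lemma topspace_strong_topology [simp]: "topspace (strong_topology \<nu>) = UNIV"
  using openin_subset[of "strong_topology \<nu>" UNIV]
  unfolding openin_strong_topology by (metis top.extremum zero_less_one top.extremum_uniqueI)

end

locale pn_operator = V: pn_space \<nu> + W: pn_space \<mu>
  for \<nu> :: "'a::real_vector \<Rightarrow> real \<Rightarrow> real" and \<mu> :: "'b::real_vector \<Rightarrow> real \<Rightarrow> real" +
  fixes T :: "'a \<Rightarrow> 'b"
  assumes linear: "linear T"
begin

lemma continuous_map_strong_topology_if_continuous_at_zero: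
  assumes "\<And>t. 0 < t \<Longrightarrow> \<exists>s>0. T ` zero_nbhd \<nu> s \<subseteq> zero_nbhd \<mu> t"
  shows "continuous_map (strong_topology \<nu>) (strong_topology \<mu>) T"
proof -
  have "\<exists>s>0. strong_nbhd \<nu> p s \<subseteq> {x. T x \<in> U}"
    if U: "\<forall>q\<in>U. \<exists>t>0. strong_nbhd \<mu> q t \<subseteq> U" and "T p \<in> U" for U p
  proof -
    obtain t where t: "0 < t" "strong_nbhd \<mu> (T p) t \<subseteq> U" using U \<open>T p \<in> U\<close> by blast
    obtain s where s: "0 < s" "T ` zero_nbhd \<nu> s \<subseteq> zero_nbhd \<mu> t" using assms t(1) by blast
    have "T ` strong_nbhd \<nu> p s \<subseteq> strong_nbhd \<mu> (T p) t"
      using s(2) by (auto simp: strong_nbhd_eq linear_diff[OF linear, symmetric])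
    then show ?thesis using s(1) t(2) by blast
  qed
  then show ?thesis
    unfolding continuous_map_def V.openin_strong_topology W.openin_strong_topology by auto
qed

text \<open>Baire applied to the cover by the dilates of \<open>T -` zero_nbhd \<mu> (t/2)\<close> yields a ball around some \<open>a\<close> in the closure of one of
  them, and every small \<open>x\<close> is a difference of two points of that ball, rescaled.\<close>

lemma zero_nbhd_subset_strong_closure:
  assumes complete: "strongly_complete \<nu>" and t: "0 < t"
  shows "\<exists>s>0. zero_nbhd \<nu> s \<subseteq> strong_closure \<nu> (T -` zero_nbhd \<mu> t)"
proof -
  define A where "A k = {y. T (y /\<^sub>R real (Suc k)) \<in> zero_nbhd \<mu> (t / 2)}" for k
  have "\<exists>k. y \<in> A k" for y
    using W.zero_nbhd_absorbing[of "t / 2" "T y"] t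
    unfolding A_def by (simp add: linear_scale[OF linear])
  then obtain k a r where r: "0 < r"
    and ball: "{y. a - y \<in> zero_nbhd \<nu> r} \<subseteq> strong_closure \<nu> (A k)"
    using V.baire_category[OF complete] by blast
  define n where "n = real (Suc k)"
  have n: "1 \<le> n" unfolding n_def by simp
  have "x \<in> strong_closure \<nu> (T -` zero_nbhd \<mu> t)" if x: "x \<in> zero_nbhd \<nu> (r / n)" for x
    unfolding strong_closure_def
  proof (intro CollectI allI impI)
    fix \<rho> :: real assume \<rho>: "0 < \<rho>"
    have "a - (a - n *\<^sub>R x) \<in> zero_nbhd \<nu> r"
      using V.zero_nbhd_scaleR_stretch[OF x n] n by simp
    then have closure: "a \<in> strong_closure \<nu> (A k)" "a - n *\<^sub>R x \<in> strong_closure \<nu> (A k)"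
      using ball V.zero_in_zero_nbhd[OF r] by auto
    have "0 < \<rho> / 2" using \<rho> by simp
    then obtain b1 b2 where b: "b1 \<in> A k" "a - b1 \<in> zero_nbhd \<nu> (\<rho> / 2)"
      "b2 \<in> A k" "(a - n *\<^sub>R x) - b2 \<in> zero_nbhd \<nu> (\<rho> / 2)"
      using closure unfolding strong_closure_def by blast
    define c where "c = (b1 - b2) /\<^sub>R n"
    have "T c = T (b1 /\<^sub>R n) - T (b2 /\<^sub>R n)"
      unfolding c_def by (simp add: linear_diff[OF linear] scaleR_diff_right)
    moreover have "T (b1 /\<^sub>R n) - T (b2 /\<^sub>R n) \<in> zero_nbhd \<mu> (t / 2 + t / 2)"
      using b(1,3) unfolding A_def n_def by (intro W.zero_nbhd_diff) simp_all
    ultimately have "T c \<in> zero_nbhd \<mu> t" by simp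
    moreover have "n *\<^sub>R x - (b1 - b2) \<in> zero_nbhd \<nu> \<rho>"
      using V.zero_nbhd_diff[OF b(2,4)] by (simp add: algebra_simps)
    then have "(n *\<^sub>R x - (b1 - b2)) /\<^sub>R n \<in> zero_nbhd \<nu> \<rho>"
      by (rule V.zero_nbhd_scaleR_shrink) (use n in \<open>simp add: inverse_le_1_iff\<close>)
    moreover have "(n *\<^sub>R x - (b1 - b2)) /\<^sub>R n = x - c"
      using n unfolding c_def by (simp add: scaleR_diff_right)
    ultimately show "\<exists>c\<in>T -` zero_nbhd \<mu> t. x - c \<in> zero_nbhd \<nu> \<rho>" by auto
  qed
  then show ?thesis using r n by (intro exI[of _ "r / n"] conjI subsetI) simp_all
qed


lemma approximating_sequence:
  assumes s0: "\<And>n. 0 < s n"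
    and s: "\<And>n. zero_nbhd \<nu> (s n) \<subseteq> strong_closure \<nu> (T -` zero_nbhd \<mu> (a n))"
    and x: "x \<in> zero_nbhd \<nu> (s 0)"
  obtains f where "f 0 = x"
    "\<And>n. T (f n - f (Suc n)) \<in> zero_nbhd \<mu> (a n)" "\<And>n. f (Suc n) \<in> zero_nbhd \<nu> ((1/2) ^ Suc n)"
proof -
  define start where "start n e \<longleftrightarrow> e \<in> zero_nbhd \<nu> (s n) \<and> (n = 0 \<longrightarrow> e = x)" for n e
  define step where "step n e e' \<longleftrightarrow>
      T (e - e') \<in> zero_nbhd \<mu> (a n) \<and> e' \<in> zero_nbhd \<nu> ((1/2) ^ Suc n)" for n e e'
  have "\<exists>f. \<forall>n. start n (f n) \<and> step n (f n) (f (Suc n))"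
  proof (rule dependent_nat_choice)
    show "\<exists>e. start 0 e" using x unfolding start_def by auto
  next
    fix e n assume "start n e"
    then have "e \<in> strong_closure \<nu> (T -` zero_nbhd \<mu> (a n))"
      using s unfolding start_def by blast
    moreover have "0 < min (s (Suc n)) ((1/2) ^ Suc n)" using s0 by simp
    ultimately obtain c where c: "T c \<in> zero_nbhd \<mu> (a n)"
      "e - c \<in> zero_nbhd \<nu> (min (s (Suc n)) ((1/2) ^ Suc n))"
      unfolding strong_closure_def by blast
    have "e - c \<in> zero_nbhd \<nu> (s (Suc n))" "e - c \<in> zero_nbhd \<nu> ((1/2) ^ Suc n)"
      by (rule V.zero_nbhd_mono[OF _ c(2)]; simp)+
    then have "start (Suc n) (e - c) \<and> step n e (e - c)"
      using c(1) unfolding start_def step_def by simp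
    then show "\<exists>e'. start (Suc n) e' \<and> step n e e'" ..
  qed
  then obtain f where f: "\<And>n. start n (f n) \<and> step n (f n) (f (Suc n))" by blast
  show ?thesis
    by (rule that[of f]) (use f[of 0] f in \<open>simp_all add: start_def step_def\<close>)
qed

text \<open>Subtracting successive approximations leaves remainders tending to \<open>0\<close> whose images form
  a strong Cauchy sequence; the closed graph property forces the images to tend to \<open>T 0 = 0\<close>.\<close>

lemma continuous_at_zero_if_closed_graph:
  assumes complete_V: "strongly_complete \<nu>" and complete_W: "strongly_complete \<mu>"
    and closed_graph: "\<And>xs x y. strong_conv \<nu> xs x \<Longrightarrow> strong_conv \<mu> (\<lambda>n. T (xs n)) y \<Longrightarrow> y = T x"
    and t: "0 < t"
  shows "\<exists>s>0. T ` zero_nbhd \<nu> s \<subseteq> zero_nbhd \<mu> t"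
proof -
  have "\<forall>n. \<exists>s>0. zero_nbhd \<nu> s \<subseteq> strong_closure \<nu> (T -` zero_nbhd \<mu> (t / 2 ^ (n + 2)))"
    using zero_nbhd_subset_strong_closure[OF complete_V] t by simp
  then obtain s where s0: "\<And>n. 0 < s n"
    and s: "\<And>n. zero_nbhd \<nu> (s n) \<subseteq> strong_closure \<nu> (T -` zero_nbhd \<mu> (t / 2 ^ (n + 2)))"
    by metis
  have "T x \<in> zero_nbhd \<mu> t" if x: "x \<in> zero_nbhd \<nu> (s 0)" for x
  proof -
    obtain f where f0: "f 0 = x" and f_step: "\<And>n. T (f n - f (Suc n)) \<in> zero_nbhd \<mu> (t / 2 ^ (n + 2))"
      and f_small: "\<And>n. f (Suc n) \<in> zero_nbhd \<nu> ((1/2) ^ Suc n)"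
      using approximating_sequence[of s "\<lambda>n. t / 2 ^ (n + 2)", OF s0 s x] by blast
    have steps: "T (f n) - T (f (Suc n)) \<in> zero_nbhd \<mu> (t / 2 ^ (n + 1) - t / 2 ^ (Suc n + 1))" for n
      using f_step[of n] by (simp add: linear_diff[OF linear])
    have "0 - f n \<in> zero_nbhd \<nu> ((1/2) ^ n)" if n: "1 \<le> n" for n
    proof -
      obtain m where "n = Suc m" using Suc_le_D[of 0 n] n by auto
      then show ?thesis using f_small[of m] by simp
    qed
    then have "eventually (\<lambda>n. 0 - f n \<in> zero_nbhd \<nu> ((1/2) ^ n)) sequentially"
      by (rule eventually_sequentiallyI)
    then have f_conv: "strong_conv \<nu> f 0"
      by (rule V.strong_conv_if_eventually) (simp add: LIMSEQ_power_zero)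
    have "(\<lambda>n. t / 2 ^ (n + 1)) \<longlonglongrightarrow> 0"
      using tendsto_mult_right_zero[OF LIMSEQ_power_zero[of "1/2::real"], of "t/2"]
      by (simp add: power_one_over)
    then obtain y where y: "strong_conv \<mu> (\<lambda>n. T (f n)) y"
      using complete_W W.strong_Cauchy_if_steps[of "\<lambda>n. T (f n)", OF steps]
      unfolding strongly_complete_def by blast
    have "y = 0" using closed_graph[OF f_conv y] linear_0[OF linear] by simp
    then have "eventually (\<lambda>n. 0 - T (f n) \<in> zero_nbhd \<mu> (t / 2)) sequentially"
      using y t unfolding strong_conv_def strong_nbhd_eq by simp
    then obtain M where M: "\<And>n. M \<le> n \<Longrightarrow> 0 - T (f n) \<in> zero_nbhd \<mu> (t / 2)"
      unfolding eventually_sequentially by blast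
    have "T (f 0) - T (f (Suc M)) \<in> zero_nbhd \<mu> (t / 2 - t / 2 ^ (Suc M + 1))"
      using W.zero_nbhd_telescope[of "\<lambda>n. T (f n)", OF steps, of 0 "Suc M"] by simp
    then have "T (f 0) - T (f (Suc M)) \<in> zero_nbhd \<mu> (t / 2)"
      by (rule W.zero_nbhd_mono[rotated]) (use t in simp)
    from W.zero_nbhd_diff[OF this M[of "Suc M"]]
    have "T (f 0) - T (f (Suc M)) - (0 - T (f (Suc M))) \<in> zero_nbhd \<mu> (t / 2 + t / 2)"
      by simp
    then show ?thesis using f0 by simp
  qed
  then show ?thesis using s0[of 0] by blast
qed

end

theorem theorem4p10:
  fixes \<nu> :: "'a::real_vector \<Rightarrow> real \<Rightarrow> real" and \<mu> :: "'b::real_vector \<Rightarrow> real \<Rightarrow> real"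
    and T :: "'a \<Rightarrow> 'b"
  assumes "PN_space \<nu>" and "PN_space \<mu>"
    and "strongly_complete \<nu>" and "strongly_complete \<mu>"
    and "linear T"
    and "\<And>xs x y. strong_conv \<nu> xs x \<Longrightarrow> strong_conv \<mu> (\<lambda>n. T (xs n)) y \<Longrightarrow> y = T x"
  shows "T \<in> bounded_ops \<nu> \<mu>"
proof -
  interpret pn_operator \<nu> \<mu> T
    using assms(1,2,5) by (simp add: pn_operator_def pn_operator_axioms_def pn_space_def)
  have "continuous_map (strong_topology \<nu>) (strong_topology \<mu>) T"
    using continuous_at_zero_if_closed_graph[OF assms(3,4,6)]
    by (rule continuous_map_strong_topology_if_continuous_at_zero)
  with assms(5) show ?thesis unfolding bounded_ops_def by blast
qed

end
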